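(* Let $C_1\geq C_2\geq 0$ and let $n>8^4(C_1-C_2+1)^4$ be an integer such that $f(m)<\sqrt{m}+C_1$ for all $m<n$. If $\chi$ is a red-blue colouring of $E(K_n)$ with $f(n,\chi)>\sqrt{n}+C_2$, then there is a monochromatic path $P$ in $K_n$ such that $Y=[n]\setminus V(P)$ satisfies $|Y|\leq \sqrt{n}+8(C_1-C_2+1)\sqrt[4]{n}$. Furthermore, if $\gamma$ is the colour of the edges of $P$, then for every $y\in Y$ the set $\{x\in V(P):\chi(xy)=\gamma\}$ has size at most $2(C_1-C_2+1)\sqrt{n}$.
   Context: $K_n$ is the complete graph on vertex set $[n]=\{1,\dots,n\}$. For a red-blue colouring $\chi$ of $E(K_n)$, $f(n,\chi)$ is the smallest size of a family of monochromatic paths, all of the same colour, whose union covers $[n]$; here paths may have length zero (a single vertex) and need not be disjoint. $f(n)$ is the maximum of $f(n,\chi)$ over all red-blue colourings $\chi$ of $E(K_n)$. *)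

theory Defs
  imports Complex_Main
begin

text \<open>A red-blue colouring of the edges of K_n on vertex set [n] = {1..n} is a map
  from two-element sets {x,y} to bool (True = red, False = blue); only its values on
  edges {x,y} with x \<noteq> y in {1..n} are relevant.\<close>

type_synonym colouring = "nat set \<Rightarrow> bool"

definition mono_path :: "nat \<Rightarrow> colouring \<Rightarrow> bool \<Rightarrow> nat list \<Rightarrow> bool" where
  "mono_path n chi c P \<longleftrightarrow>
     P \<noteq> [] \<and> distinct P \<and> set P \<subseteq> {1..n} \<and>
     (\<forall>i. Suc i < length P \<longrightarrow> chi {P ! i, P ! Suc i} = c)"

definition path_cover :: "nat \<Rightarrow> colouring \<Rightarrow> bool \<Rightarrow> nat \<Rightarrow> bool" where
  "path_cover n chi c k \<longleftrightarrow>
     (\<exists>Ps. length Ps = k \<and> (\<forall>P\<in>set Ps. mono_path n chi c P) \<and>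
           (\<Union>P\<in>set Ps. set P) = {1..n})"

definition f_col :: "nat \<Rightarrow> colouring \<Rightarrow> nat" where
  "f_col n chi = (LEAST k. \<exists>c. path_cover n chi c k)"

definition f_max :: "nat \<Rightarrow> nat" where
  "f_max n = Max (range (f_col n))"

end

theory Submission
  imports Defs
begin

text \<open>Let \<open>P\<close> be a longest monochromatic path, of colour \<open>c\<close>. If a set \<open>S\<close> can be covered
  by \<open>k\<close> paths of either colour, then removing it shows
  \<open>f(n,\<chi>) \<le> f(n - |S|) + k < \<surd>(n - |S|) + C\<^sub>1 + k\<close>, which together with
  \<open>f(n,\<chi>) > \<surd>n + C\<^sub>2\<close> bounds \<open>|S|\<close>.
  For \<open>y\<close> outside \<open>P\<close>, Posa rotations show that \<open>y\<close> together with the successors on \<open>P\<close> of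
  its \<open>c\<close>-neighbours other than the last one is a clique of the other colour and lies on one
  \<open>c\<close>-path; this gives the degree bound. With few \<open>c\<close>-neighbours, paths of the other colour
  alternating between the outside vertices and fresh vertices of \<open>P\<close> cover a large part of
  \<open>P\<close>, so there cannot be many outside vertices.\<close>

definition covered_by_paths :: "nat \<Rightarrow> colouring \<Rightarrow> bool \<Rightarrow> nat \<Rightarrow> nat set \<Rightarrow> bool" where
  "covered_by_paths n chi c k S \<longleftrightarrow>
     (\<exists>Ps. length Ps \<le> k \<and> (\<forall>P\<in>set Ps. mono_path n chi c P) \<and> S \<subseteq> (\<Union>P\<in>set Ps. set P))"

lemma mono_path_iff_successively:
  "mono_path n chi c P \<longleftrightarrow>
     P \<noteq> [] \<and> distinct P \<and> set P \<subseteq> {1..n} \<and> successively (\<lambda>a b. chi {a, b} = c) P"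
  unfolding mono_path_def successively_conv_nth by blast

lemma last_take_Suc: "i < length xs \<Longrightarrow> last (take (Suc i) xs) = xs ! i"
  by (subst last_conv_nth) (auto simp: min_def intro: arg_cong[where f = "(!) xs"])

lemma mono_path_length_le: "mono_path n chi c P \<Longrightarrow> length P \<le> n"
  unfolding mono_path_def by (metis card_atLeastAtMost card_mono diff_Suc_1 distinct_card finite_atLeastAtMost)

lemma card_less_if_missing:
  assumes "A \<subseteq> {1..n}" "x \<in> {1..n}" "x \<notin> A"
  shows "card A < n"
proof -
  have "A \<subset> {1..n}"
    using assms by blast
  then show ?thesis
    using psubset_card_mono[of "{1..n}"] by simp
qed

lemma covered_by_paths_mono:
  "covered_by_paths n chi c k S \<Longrightarrow> k \<le> k' \<Longrightarrow> S' \<subseteq> S \<Longrightarrow> covered_by_paths n chi c k' S'"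
  unfolding covered_by_paths_def by (meson order_trans)

lemma covered_by_paths_Un:
  assumes "covered_by_paths n chi c k S" "covered_by_paths n chi c k' S'"
  shows "covered_by_paths n chi c (k + k') (S \<union> S')"
proof -
  obtain Ps Ps' where "length Ps \<le> k" "\<forall>P\<in>set Ps. mono_path n chi c P" "S \<subseteq> (\<Union>P\<in>set Ps. set P)"
    "length Ps' \<le> k'" "\<forall>P\<in>set Ps'. mono_path n chi c P" "S' \<subseteq> (\<Union>P\<in>set Ps'. set P)"
    using assms unfolding covered_by_paths_def by blast
  then show ?thesis
    unfolding covered_by_paths_def by (intro exI[of _ "Ps @ Ps'"]) auto
qed

lemma covered_by_paths_path:
  "mono_path n chi c P \<Longrightarrow> S \<subseteq> set P \<Longrightarrow> covered_by_paths n chi c 1 S"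
  unfolding covered_by_paths_def by (intro exI[of _ "[P]"]) auto

lemma covered_by_paths_clique:
  assumes "finite S" "S \<noteq> {}" "S \<subseteq> {1..n}"
    and "\<And>a b. a \<in> S \<Longrightarrow> b \<in> S \<Longrightarrow> a \<noteq> b \<Longrightarrow> chi {a, b} = c"
  shows "covered_by_paths n chi c 1 S"
proof (rule covered_by_paths_path)
  let ?P = "sorted_list_of_set S"
  have "sorted_wrt (<) ?P"
    by simp
  then have "sorted_wrt (\<lambda>a b. chi {a, b} = c) ?P"
    by (rule sorted_wrt_mono_rel[rotated]) (use assms in auto)
  then have "successively (\<lambda>a b. chi {a, b} = c) ?P"
    by (rule successively_if_sorted_wrt)
  then show "mono_path n chi c ?P"
    using assms by (simp add: mono_path_iff_successively)
qed (use assms in simp)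

lemma path_cover_singletons: "path_cover n chi c n"
  unfolding path_cover_def
  by (intro exI[of _ "map (\<lambda>i. [i]) [1..<Suc n]"]) (auto simp: mono_path_def)

lemma f_col_le: "f_col n chi \<le> n"
  unfolding f_col_def by (rule Least_le) (use path_cover_singletons in blast)

lemma f_col_le_f_max: "f_col n chi \<le> f_max n"
proof -
  have "finite (range (f_col n))"
    by (rule finite_subset[of _ "{..n}"]) (use f_col_le in auto)
  then show ?thesis
    unfolding f_max_def by (rule Max_ge) simp
qed

lemma ex_covered_by_f_col_paths: "\<exists>c. covered_by_paths n chi c (f_col n chi) {1..n}"
proof -
  have "\<exists>c. path_cover n chi c (f_col n chi)"
    unfolding f_col_def by (rule LeastI_ex) (use path_cover_singletons in blast)
  then show ?thesis
    unfolding path_cover_def covered_by_paths_def by (metis order_refl)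
qed

lemma f_col_le_if_covered: "covered_by_paths n chi c k {1..n} \<Longrightarrow> f_col n chi \<le> k"
proof -
  assume "covered_by_paths n chi c k {1..n}"
  then obtain Ps where Ps: "length Ps \<le> k" "\<forall>P\<in>set Ps. mono_path n chi c P"
    "{1..n} \<subseteq> (\<Union>P\<in>set Ps. set P)"
    unfolding covered_by_paths_def by blast
  then have "path_cover n chi c (length Ps)"
    unfolding path_cover_def mono_path_def by blast
  then have "f_col n chi \<le> length Ps"
    unfolding f_col_def by (rule Least_le[OF exI])
  with Ps(1) show ?thesis by simp
qed

lemma mono_path_relabel:
  assumes "inj_on h {1..m}" "h ` {1..m} \<subseteq> {1..n}"
    and "mono_path m (\<lambda>e. chi (h ` e)) c P"
  shows "mono_path n chi c (map h P)"
proof -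
  have "set P \<subseteq> {1..m}"
    using assms(3) unfolding mono_path_def by blast
  then have "inj_on h (set P)" "h ` set P \<subseteq> {1..n}"
    using assms(1,2) inj_on_subset by blast+
  with assms(3) show ?thesis
    by (auto simp: mono_path_iff_successively distinct_map successively_map)
qed

lemma covered_by_paths_relabel:
  assumes "inj_on h {1..m}" "h ` {1..m} \<subseteq> {1..n}"
    and "covered_by_paths m (\<lambda>e. chi (h ` e)) c k S"
  shows "covered_by_paths n chi c k (h ` S)"
proof -
  obtain Ps where Ps: "length Ps \<le> k" "\<forall>P\<in>set Ps. mono_path m (\<lambda>e. chi (h ` e)) c P"
    "S \<subseteq> (\<Union>P\<in>set Ps. set P)"
    using assms(3) unfolding covered_by_paths_def by blast
  have "\<forall>P\<in>set (map (map h) Ps). mono_path n chi c P"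
    using Ps(2) mono_path_relabel[OF assms(1,2)] by auto
  moreover have "h ` S \<subseteq> (\<Union>P\<in>set (map (map h) Ps). set P)"
    using Ps(3) by fastforce
  ultimately show ?thesis
    unfolding covered_by_paths_def using Ps(1) by (metis length_map)
qed

text \<open>The complement of \<open>S\<close> is covered optimally after relabelling it as \<open>{1..m}\<close>; the
  \<open>k\<close> paths covering \<open>S\<close> are then added in the colour of that optimal cover.\<close>

lemma f_col_le_f_max_remove:
  assumes "S \<subseteq> {1..n}" "\<And>c. covered_by_paths n chi c k S"
  shows "f_col n chi \<le> f_max (n - card S) + k"
proof -
  define R where "R = {1..n} - S"
  define m where "m = card R"
  have m: "m = n - card S"
    unfolding m_def R_def using assms(1) by (simp add: card_Diff_subset finite_subset)
  obtain h where h: "bij_betw h {1..m} R"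
    using ex_bij_betw_nat_finite_1[of R] unfolding m_def R_def by auto
  define chi' where "chi' = (\<lambda>e. chi (h ` e))"
  obtain c where "covered_by_paths m chi' c (f_col m chi') {1..m}"
    using ex_covered_by_f_col_paths by blast
  then have "covered_by_paths n chi c (f_col m chi') R"
    using h covered_by_paths_relabel[of h m n chi c _ "{1..m}"]
    unfolding chi'_def R_def bij_betw_def by auto
  then have "covered_by_paths n chi c (f_col m chi' + k) (R \<union> S)"
    using assms(2) by (rule covered_by_paths_Un)
  moreover have "R \<union> S = {1..n}"
    unfolding R_def using assms(1) by blast
  ultimately have "f_col n chi \<le> f_col m chi' + k"
    by (metis f_col_le_if_covered)
  also have "\<dots> \<le> f_max (n - card S) + k"
    using f_col_le_f_max m by simp
  finally show ?thesis .
qed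

lemma half_div_sqrt_le_sqrt_diff:
  fixes N t :: real
  assumes "0 \<le> t" "t \<le> N"
  shows "t / (2 * sqrt N) \<le> sqrt N - sqrt (N - t)"
proof (cases "N = 0")
  case False
  define a b where "a = sqrt N" and "b = sqrt (N - t)"
  have "0 < a" "0 \<le> b" "b \<le> a"
    using assms False unfolding a_def b_def by auto
  have "t = (a - b) * (a + b)"
    using assms unfolding a_def b_def by (simp add: algebra_simps)
  also have "\<dots> \<le> (a - b) * (2 * a)"
    using \<open>0 \<le> b\<close> \<open>b \<le> a\<close> by (intro mult_left_mono) auto
  finally show ?thesis
    using \<open>0 < a\<close> unfolding a_def b_def by (simp add: divide_simps mult.commute)
qed (use assms in simp)

locale critical_colouring =
  fixes n :: nat and chi :: colouring and C1 C2 :: real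
  assumes C2_le_C1: "C1 \<ge> C2"
    and f_max_less: "\<forall>m. 1 \<le> m \<and> m < n \<longrightarrow> real (f_max m) < sqrt (real m) + C1"
    and f_col_greater: "real (f_col n chi) > sqrt (real n) + C2"
begin

lemma sqrt_less_remove:
  assumes "S \<subseteq> {1..n}" "S \<noteq> {}" "card S < n" "\<And>c. covered_by_paths n chi c k S"
  shows "sqrt (real n) + C2 < sqrt (real n - real (card S)) + C1 + real k"
proof -
  have "card S > 0"
    using assms(1,2) by (simp add: card_gt_0_iff finite_subset)
  then have "real (f_max (n - card S)) < sqrt (real (n - card S)) + C1"
    using assms(3) by (intro f_max_less[rule_format]) simp
  moreover have "f_col n chi \<le> f_max (n - card S) + k"
    using assms(1,4) by (rule f_col_le_f_max_remove)
  ultimately show ?thesis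
    using f_col_greater assms(3) by simp
qed

lemma card_less_if_covered_by_paths:
  assumes "S \<subseteq> {1..n}" "S \<noteq> {}" "card S < n" "\<And>c. covered_by_paths n chi c k S"
  shows "real (card S) < 2 * (C1 - C2 + real k) * sqrt (real n)"
proof -
  have "real (card S) / (2 * sqrt (real n)) \<le> sqrt (real n) - sqrt (real n - real (card S))"
    using assms(3) by (intro half_div_sqrt_le_sqrt_diff) auto
  also have "\<dots> < C1 - C2 + real k"
    using sqrt_less_remove[OF assms] by simp
  finally show ?thesis
    using assms(3) by (simp add: divide_simps mult_ac)
qed

end

lemma ex_two_mono_paths_partition:
  "finite V \<Longrightarrow> \<exists>R B. distinct (R @ B) \<and> set (R @ B) = V \<and>
     successively (\<lambda>a b. chi {a, b}) R \<and> successively (\<lambda>a b. \<not> chi {a, b}) B"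
proof (induction V rule: finite_induct)
  case empty
  show ?case by (intro exI[of _ "[]"]) simp
next
  case (insert w V)
  then obtain R B where RB: "distinct (R @ B)" "set (R @ B) = V"
    "successively (\<lambda>a b. chi {a, b}) R" "successively (\<lambda>a b. \<not> chi {a, b}) B"
    by blast
  have w: "w \<notin> set R" "w \<notin> set B"
    using RB(2) insert(2) by auto
  consider "R = [] \<or> chi {w, hd R}" | "B = [] \<or> \<not> chi {w, hd B}"
    | r R' b B' where "R = r # R'" "B = b # B'" "\<not> chi {w, r}" "chi {w, b}"
    by (cases R; cases B) auto
  then show ?case
  proof cases
    case 1
    with RB w show ?thesis
      by (intro exI[of _ "w # R"] exI[of _ B]) (auto simp: successively_Cons)
  next
    case 2
    with RB w show ?thesis
      by (intro exI[of _ R] exI[of _ "w # B"]) (auto simp: successively_Cons)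
  next
    case 3
    text \<open>The edge \<open>rb\<close> lets \<open>w\<close> enter one path together with the head of the other.\<close>
    show ?thesis
    proof (cases "chi {r, b}")
      case True
      with RB w 3 show ?thesis
        by (intro exI[of _ "w # b # R"] exI[of _ B'])
          (auto simp: successively_Cons insert_commute)
    next
      case False
      with RB w 3 show ?thesis
        by (intro exI[of _ R'] exI[of _ "w # r # B"])
          (auto simp: successively_Cons insert_commute)
    qed
  qed
qed

locale longest_mono_path =
  fixes n :: nat and chi :: colouring and c :: bool and P :: "nat list"
  assumes mono_path_P: "mono_path n chi c P"
    and longest: "\<And>Q c'. mono_path n chi c' Q \<Longrightarrow> length Q \<le> length P"

lemma ex_longest_mono_path:
  assumes "n \<ge> 1"
  shows "\<exists>c P. longest_mono_path n chi c P"
proof -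
  have "mono_path n chi True [1]"
    using assms by (simp add: mono_path_def)
  then have "\<exists>P. (\<exists>c. mono_path n chi c P) \<and>
      (\<forall>Q. (\<exists>c'. mono_path n chi c' Q) \<longrightarrow> length Q \<le> length P)"
    by (intro ex_has_greatest_nat[of _ _ _ "Suc n"]) (auto dest: mono_path_length_le)
  then show ?thesis
    unfolding longest_mono_path_def by blast
qed

context longest_mono_path
begin

lemma P_props: "P \<noteq> []" "distinct P" "set P \<subseteq> {1..n}"
  "successively (\<lambda>a b. chi {a, b} = c) P"
  using mono_path_P unfolding mono_path_iff_successively by auto

lemma successively_take_drop:
  "successively (\<lambda>a b. chi {a, b} = c) (take k P)"
  "successively (\<lambda>a b. chi {a, b} = c) (drop k P)"
  using P_props(4) successively_append_iff[of _ "take k P" "drop k P"] by simp_all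

lemma card_le_twice_length: "n \<le> 2 * length P"
proof -
  obtain R B where RB: "distinct (R @ B)" "set (R @ B) = {1..n}"
    "successively (\<lambda>a b. chi {a, b}) R" "successively (\<lambda>a b. \<not> chi {a, b}) B"
    using ex_two_mono_paths_partition[of "{1..n}" chi] by auto
  have "length R \<le> length P"
    using RB longest[of True R] by (cases "R = []") (auto simp: mono_path_iff_successively)
  moreover have "length B \<le> length P"
  proof (cases "B = []")
    case False
    with RB have "mono_path n chi False B"
      by (auto simp: mono_path_iff_successively)
    then show ?thesis by (rule longest)
  qed simp
  moreover have "length R + length B = n"
    using distinct_card[OF RB(1)] RB(2) by simp
  ultimately show ?thesis by linarith
qed

lemma not_successively_insert:
  assumes "y \<in> {1..n} - set P" "set Q = insert y (set P)" "length Q = Suc (length P)"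
  shows "\<not> successively (\<lambda>a b. chi {a, b} = c) Q"
proof
  assume "successively (\<lambda>a b. chi {a, b} = c) Q"
  moreover have "distinct Q"
    using assms P_props(2) by (simp add: card_distinct distinct_card)
  ultimately have "mono_path n chi c Q"
    using assms(1,2) P_props(3) by (auto simp: mono_path_iff_successively)
  then show False
    using longest[of c Q] assms(3) by simp
qed

context
  fixes y assumes y: "y \<in> {1..n} - set P"
begin

lemma posa_last: "chi {last P, y} \<noteq> c"
proof
  assume "chi {last P, y} = c"
  then have "successively (\<lambda>a b. chi {a, b} = c) (P @ [y])"
    using P_props by (simp add: successively_append_iff)
  then show False
    using not_successively_insert[OF y, of "P @ [y]"] by simp
qed

lemma posa_succ:
  assumes "Suc i < length P" "chi {P ! i, y} = c"
  shows "chi {P ! Suc i, y} \<noteq> c"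
proof
  assume a: "chi {P ! Suc i, y} = c"
  let ?Q = "take (Suc i) P @ y # drop (Suc i) P"
  have "last (take (Suc i) P) = P ! i"
    using assms(1) by (simp add: last_take_Suc)
  moreover have "hd (drop (Suc i) P) = P ! Suc i"
    using assms(1) by (simp add: hd_drop_conv_nth)
  ultimately have "successively (\<lambda>a b. chi {a, b} = c) ?Q"
    using successively_take_drop assms a
    by (simp add: successively_append_iff successively_Cons insert_commute)
  moreover have "set ?Q = insert y (set P)"
    using set_append[of "take (Suc i) P" "drop (Suc i) P"] by simp
  moreover have "length ?Q = Suc (length P)"
    using assms(1) by simp
  ultimately show False
    using not_successively_insert[OF y] by blast
qed

text \<open>Otherwise \<open>P\<^sub>0 \<dots> P\<^sub>i y P\<^sub>j P\<^sub>j\<^sub>-\<^sub>1 \<dots> P\<^sub>i\<^sub>+\<^sub>1 P\<^sub>j\<^sub>+\<^sub>1 \<dots>\<close> is a longer path (a Posa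
  rotation).\<close>

lemma posa_cross:
  assumes "i < j" "Suc j < length P" "chi {P ! i, y} = c" "chi {P ! j, y} = c"
  shows "chi {P ! Suc i, P ! Suc j} \<noteq> c"
proof
  assume a: "chi {P ! Suc i, P ! Suc j} = c"
  define A M C where "A = take (Suc i) P" and "M = drop (Suc i) (take (Suc j) P)"
    and "C = drop (Suc j) P"
  have "take (Suc j) P = A @ M"
    unfolding A_def M_def using assms(1) by (metis append_take_drop_id min.absorb1 take_take
        Suc_le_mono less_imp_le_nat)
  then have P: "P = A @ M @ C"
    unfolding C_def by (metis append.assoc append_take_drop_id)
  have ends: "last A = P ! i" "hd M = P ! Suc i" "last M = P ! j" "hd C = P ! Suc j"
    "M \<noteq> []" "C \<noteq> []"
    unfolding A_def M_def C_def using assms(1,2)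
    by (simp_all add: last_take_Suc hd_drop_conv_nth last_drop)
  have "successively (\<lambda>a b. chi {a, b} = c) A" "successively (\<lambda>a b. chi {a, b} = c) M"
    "successively (\<lambda>a b. chi {a, b} = c) C"
    using P_props(4) unfolding P by (simp_all add: successively_append_iff)
  then have "successively (\<lambda>a b. chi {a, b} = c) (A @ y # rev M @ C)"
    using ends assms(3,4) a
    by (simp add: successively_append_iff successively_Cons insert_commute hd_rev last_rev)
  moreover have "set (A @ y # rev M @ C) = insert y (set P)"
    using P by auto
  moreover have "length (A @ y # rev M @ C) = Suc (length P)"
    using P by simp
  ultimately show False
    using not_successively_insert[OF y] by blast
qed

end

definition nbr_idx :: "nat \<Rightarrow> nat set" where
  "nbr_idx y = {i. i < length P \<and> chi {P ! i, y} = c}"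

text \<open>By the Posa rotations, this set can be covered by one path of each colour.\<close>

definition posa_set :: "nat \<Rightarrow> nat set" where
  "posa_set y = insert y ((\<lambda>i. P ! Suc i) ` (nbr_idx y - {Max (nbr_idx y)}))"

lemma finite_nbr_idx: "finite (nbr_idx y)"
  unfolding nbr_idx_def by simp

lemma card_nbrs_eq_card_nbr_idx: "card {x \<in> set P. chi {x, y} = c} = card (nbr_idx y)"
proof -
  have "{x \<in> set P. chi {x, y} = c} = (\<lambda>i. P ! i) ` nbr_idx y"
    unfolding nbr_idx_def by (auto simp: in_set_conv_nth)
  moreover have "inj_on (\<lambda>i. P ! i) (nbr_idx y)"
    unfolding nbr_idx_def using P_props(2) by (auto simp: inj_on_def nth_eq_iff_index_eq)
  ultimately show ?thesis
    by (simp add: card_image)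
qed

context
  fixes y assumes y: "y \<in> {1..n} - set P"
begin

lemma Suc_less_length_if_nbr_idx:
  assumes "i \<in> nbr_idx y"
  shows "Suc i < length P"
proof -
  have "i < length P" "chi {P ! i, y} = c"
    using assms unfolding nbr_idx_def by auto
  moreover have "last P = P ! (length P - 1)"
    using P_props(1) by (rule last_conv_nth)
  ultimately show ?thesis
    using posa_last[OF y] by (metis Suc_lessI diff_Suc_1)
qed

lemma nth_Suc_in_set_if_nbr_idx: "i \<in> nbr_idx y \<Longrightarrow> P ! Suc i \<in> set P"
  using Suc_less_length_if_nbr_idx by simp

lemma card_posa_set:
  assumes "nbr_idx y \<noteq> {}"
  shows "card (posa_set y) = card (nbr_idx y)"
proof -
  note fin = finite_nbr_idx
  have "inj_on (\<lambda>i. P ! Suc i) (nbr_idx y)"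
    using P_props(2) Suc_less_length_if_nbr_idx by (auto simp: inj_on_def nth_eq_iff_index_eq)
  then have "card ((\<lambda>i. P ! Suc i) ` (nbr_idx y - {Max (nbr_idx y)})) = card (nbr_idx y) - 1"
    using fin assms by (simp add: card_image inj_on_diff)
  moreover have "y \<notin> (\<lambda>i. P ! Suc i) ` (nbr_idx y - {Max (nbr_idx y)})"
    using y nth_Suc_in_set_if_nbr_idx by auto
  moreover have "card (nbr_idx y) > 0"
    using fin assms by (simp add: card_gt_0_iff)
  ultimately show ?thesis
    using fin unfolding posa_set_def by simp
qed

lemma posa_set_subset: "posa_set y \<subseteq> {1..n}"
  using y P_props(3) nth_Suc_in_set_if_nbr_idx unfolding posa_set_def by blast

lemma card_posa_set_less: "card (posa_set y) < n"
proof (rule card_less_if_missing[OF posa_set_subset])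
  show "P ! 0 \<notin> posa_set y"
    using y P_props(1,2) Suc_less_length_if_nbr_idx
    unfolding posa_set_def by (auto simp: nth_eq_iff_index_eq)
  show "P ! 0 \<in> {1..n}"
    using P_props(1,3) by (meson length_greater_0_conv nth_mem subsetD)
qed

lemma covered_posa_set_same_colour:
  assumes "nbr_idx y \<noteq> {}"
  shows "covered_by_paths n chi c 1 (posa_set y)"
proof -
  define m where "m = Max (nbr_idx y)"
  have m: "m \<in> nbr_idx y" "\<And>i. i \<in> nbr_idx y \<Longrightarrow> i \<le> m"
    unfolding m_def using assms finite_nbr_idx by simp_all
  have mP: "m < length P" "chi {y, P ! m} = c"
    using m(1) unfolding nbr_idx_def by (auto simp: insert_commute)
  let ?Q = "y # rev (take (Suc m) P)"
  have "hd (rev (take (Suc m) P)) = P ! m"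
    using mP(1) by (simp add: hd_rev last_take_Suc)
  then have "successively (\<lambda>a b. chi {a, b} = c) ?Q"
    using successively_take_drop(1)[of "Suc m"] mP(2)
    by (simp add: successively_Cons insert_commute)
  then have "mono_path n chi c ?Q"
    using y P_props(2,3) by (auto simp: mono_path_iff_successively dest: in_set_takeD)
  moreover have "posa_set y \<subseteq> set ?Q"
  proof
    fix x assume "x \<in> posa_set y"
    then consider "x = y" | i where "i \<in> nbr_idx y" "i < m" "x = P ! Suc i"
      unfolding posa_set_def m_def[symmetric] using m(2) by fastforce
    then show "x \<in> set ?Q"
    proof cases
      case 2
      then have "x = take (Suc m) P ! Suc i" "Suc i < length (take (Suc m) P)"
        using Suc_less_length_if_nbr_idx by auto
      then show ?thesis
        by (metis nth_mem set_rev set_subset_Cons subsetD)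
    qed simp
  qed
  ultimately show ?thesis
    by (rule covered_by_paths_path)
qed

lemma posa_set_clique:
  assumes "a \<in> posa_set y" "b \<in> posa_set y" "a \<noteq> b"
  shows "chi {a, b} \<noteq> c"
proof -
  have succ: "chi {P ! Suc i, y} \<noteq> c" if "i \<in> nbr_idx y" for i
    using posa_succ[OF y] Suc_less_length_if_nbr_idx[OF that] that by (simp add: nbr_idx_def)
  have cross: "chi {P ! Suc i, P ! Suc j} \<noteq> c" if "i \<in> nbr_idx y" "j \<in> nbr_idx y" "i \<noteq> j" for i j
  proof (cases "i < j")
    case True
    then show ?thesis
      using posa_cross[OF y] Suc_less_length_if_nbr_idx that by (simp add: nbr_idx_def)
  next
    case False
    then show ?thesis
      using posa_cross[OF y, of j i] Suc_less_length_if_nbr_idx that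
      by (simp add: nbr_idx_def insert_commute)
  qed
  show ?thesis
    using assms succ cross unfolding posa_set_def by (auto simp: insert_commute)
qed

lemma covered_posa_set:
  assumes "nbr_idx y \<noteq> {}"
  shows "covered_by_paths n chi c' 1 (posa_set y)"
proof (cases "c' = c")
  case False
  then have "\<And>a b. a \<in> posa_set y \<Longrightarrow> b \<in> posa_set y \<Longrightarrow> a \<noteq> b \<Longrightarrow> chi {a, b} = c'"
    using posa_set_clique by blast
  then show ?thesis
    using posa_set_subset finite_subset[OF posa_set_subset]
    by (intro covered_by_paths_clique) (auto simp: posa_set_def)
qed (use covered_posa_set_same_colour assms in simp)

end

end

text \<open>The vertices of \<open>xs\<close> are chosen greedily from the back: each must avoid the vertices
  already chosen and at most \<open>2 D\<close> non-neighbours of its two neighbours in \<open>ys\<close>, where \<open>F\<close>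
  plays the role of the non-neighbours of the \<open>y\<close> preceding the head.\<close>

lemma ex_alternating_path:
  assumes "finite X" "finite F" "card F \<le> D"
    and "\<forall>y\<in>set ys. card {x \<in> X. chi {x, y} \<noteq> c} \<le> D"
    and "Suc (length ys) + 2 * D \<le> card X"
  shows "\<exists>xs. length xs = Suc (length ys) \<and> distinct xs \<and> set xs \<subseteq> X \<and> hd xs \<notin> F \<and>
           successively (\<lambda>a b. chi {a, b} = c) (splice xs ys)"
  using assms(2-5)
proof (induction ys arbitrary: F)
  case Nil
  have "card X - card F \<le> card (X - F)"
    by (rule diff_card_le_card_Diff) fact
  then have "card (X - F) \<noteq> 0"
    using Nil.prems by simp
  then obtain x where "x \<in> X - F"
    by (metis card.empty ex_in_conv)
  then show ?case
    by (intro exI[of _ "[x]"]) auto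
next
  case (Cons y ys)
  define N where "N = {x \<in> X. chi {x, y} \<noteq> c}"
  have N: "finite N" "card N \<le> D"
    unfolding N_def using assms(1) Cons.prems(3) by auto
  obtain xs where xs: "length xs = Suc (length ys)" "distinct xs" "set xs \<subseteq> X" "hd xs \<notin> N"
    "successively (\<lambda>a b. chi {a, b} = c) (splice xs ys)"
    using Cons.IH[OF N] Cons.prems(3,4) by auto
  define U where "U = set xs \<union> F \<union> N"
  have "card X - card U \<le> card (X - U)"
    by (rule diff_card_le_card_Diff) (use N Cons.prems(1) in \<open>simp add: U_def\<close>)
  moreover have "card U \<le> length xs + card F + card N"
    using card_Un_le[of "set xs \<union> F" N] card_Un_le[of "set xs" F] card_length[of xs]
    unfolding U_def by linarith
  ultimately have "card (X - U) \<noteq> 0"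
    using xs(1) N(2) Cons.prems(2,4) by simp
  then have "X - U \<noteq> {}"
    by (metis card.empty)
  then obtain x where "x \<in> X - U"
    by blast
  then have x: "x \<in> X" "x \<notin> set xs" "x \<notin> F" "x \<notin> N"
    unfolding U_def by auto
  have "xs \<noteq> []"
    using xs(1) by auto
  then have "hd (splice xs ys) = hd xs" "hd xs \<in> X"
    using xs(3) by (cases xs; auto)+
  then have "successively (\<lambda>a b. chi {a, b} = c) (splice (x # xs) (y # ys))"
    using xs(4,5) x(1,4) \<open>xs \<noteq> []\<close>
    by (simp add: successively_Cons N_def insert_commute)
  then show ?case
    using xs x by (intro exI[of _ "x # xs"]) auto
qed

lemma covered_by_alternating_paths:
  assumes "finite X" "X \<subseteq> {1..n}" "distinct ys" "set ys \<subseteq> {1..n} - X"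
    and "\<forall>y\<in>set ys. card {x \<in> X. chi {x, y} \<noteq> c} \<le> D"
    and "j * Suc (length ys) + 2 * D \<le> card X"
  shows "\<exists>W\<subseteq>X. card W = j * Suc (length ys) \<and> covered_by_paths n chi c j W"
  using assms(6)
proof (induction j)
  case 0
  have "covered_by_paths n chi c 0 {}"
    unfolding covered_by_paths_def by simp
  then show ?case by auto
next
  case (Suc j)
  then obtain W where W: "W \<subseteq> X" "card W = j * Suc (length ys)" "covered_by_paths n chi c j W"
    by auto
  have "card (X - W) = card X - j * Suc (length ys)"
    using W assms(1) by (simp add: card_Diff_subset finite_subset)
  moreover have "Suc j * Suc (length ys) = j * Suc (length ys) + Suc (length ys)"
    by simp
  ultimately have "Suc (length ys) + 2 * D \<le> card (X - W)"
    using Suc.prems by linarith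
  moreover have "\<forall>y\<in>set ys. card {x \<in> X - W. chi {x, y} \<noteq> c} \<le> D"
  proof
    fix y assume "y \<in> set ys"
    have "card {x \<in> X - W. chi {x, y} \<noteq> c} \<le> card {x \<in> X. chi {x, y} \<noteq> c}"
      using assms(1) by (intro card_mono) auto
    then show "card {x \<in> X - W. chi {x, y} \<noteq> c} \<le> D"
      using assms(5) \<open>y \<in> set ys\<close> le_trans by blast
  qed
  ultimately obtain xs where xs: "length xs = Suc (length ys)" "distinct xs" "set xs \<subseteq> X - W"
    "successively (\<lambda>a b. chi {a, b} = c) (splice xs ys)"
    using ex_alternating_path[of "X - W" "{}" D ys chi c] assms(1) by auto
  have set_splice: "set (splice xs ys) = set xs \<union> set ys"
    by (rule set_shuffles[OF splice_in_shuffles])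
  have "set xs \<inter> set ys = {}"
    using xs(3) assms(4) by auto
  then have "distinct (splice xs ys)"
    by (rule distinct_disjoint_shuffles[OF xs(2) assms(3) _ splice_in_shuffles])
  then have "mono_path n chi c (splice xs ys)"
    using xs(1,3,4) assms(2,4) set_splice by (auto simp: mono_path_iff_successively)
  then have "covered_by_paths n chi c 1 (set xs)"
    by (rule covered_by_paths_path) (simp add: set_splice)
  with W(3) have "covered_by_paths n chi c (j + 1) (W \<union> set xs)"
    by (rule covered_by_paths_Un)
  moreover have "card (W \<union> set xs) = card W + card (set xs)"
    using xs(3) finite_subset[OF W(1) assms(1)] by (intro card_Un_disjoint) auto
  then have "card (W \<union> set xs) = Suc j * Suc (length ys)"
    using W(2) xs(1) distinct_card[OF xs(2)] by simp
  moreover have "W \<union> set xs \<subseteq> X"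
    using W(1) xs(3) by blast
  ultimately show ?case
    by (intro exI[of _ "W \<union> set xs"]) simp
qed

lemma root_4_squared: "0 \<le> x \<Longrightarrow> (root 4 x)\<^sup>2 = sqrt x"
  using real_root_mult_exp[of 2 2 x] by (simp add: sqrt_def)

lemma pow4_ge_twelve_mul_sq:
  fixes k u :: real
  assumes "8 * k < u" "1 \<le> k"
  shows "12 * k * u\<^sup>2 + 4 \<le> u ^ 4"
proof -
  have u8: "8 \<le> u"
    using assms by linarith
  have "12 * k * u\<^sup>2 \<le> 12 * (u / 8) * u\<^sup>2"
    using assms by (intro mult_right_mono) auto
  also have "\<dots> = (3 / 2) * u ^ 3"
    by (simp add: power2_eq_square power3_eq_cube)
  finally have "12 * k * u\<^sup>2 \<le> (3 / 2) * u ^ 3" .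
  moreover have "8 * u ^ 3 \<le> u ^ 4"
    using u8 by (simp add: power_numeral_reduce mult_right_mono)
  moreover have "1 \<le> u ^ 3"
    using u8 by (simp add: one_le_power)
  ultimately show ?thesis by linarith
qed

lemma sqrt_le_three_mul:
  fixes k u z :: real
  assumes "1 \<le> k" "0 \<le> u" "z \<le> 8 * k * u\<^sup>2"
  shows "sqrt z \<le> 3 * k * u"
proof -
  have "k \<le> k\<^sup>2"
    using assms(1) by (simp add: power2_eq_square)
  then have "8 * k * u\<^sup>2 \<le> (9 * k\<^sup>2) * u\<^sup>2"
    using assms(1) by (intro mult_right_mono) auto
  then have "8 * k * u\<^sup>2 \<le> (3 * k * u)\<^sup>2"
    by (simp add: power_mult_distrib)
  then have "z \<le> (3 * k * u)\<^sup>2"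
    using assms(3) by linarith
  then show ?thesis
    using assms(1,2) real_le_lsqrt by (simp add: real_sqrt_le_iff real_le_rsqrt)
qed

lemma pow4_div_le:
  fixes k u :: real
  assumes "8 * k \<le> u" "0 \<le> k" "0 < u"
  shows "u ^ 4 / (u\<^sup>2 + 8 * k * u) \<le> u\<^sup>2 - 4 * k * u"
proof -
  have "(u\<^sup>2 - 4 * k * u) * (u\<^sup>2 + 8 * k * u) = u ^ 4 + 4 * k * u\<^sup>2 * (u - 8 * k)"
    by (simp add: algebra_simps power2_eq_square power4_eq_xxxx)
  moreover have "0 \<le> 4 * k * u\<^sup>2 * (u - 8 * k)"
    using assms by simp
  moreover have "0 < u\<^sup>2 + 8 * k * u"
    using assms by (simp add: add_pos_nonneg)
  ultimately show ?thesis
    by (simp add: divide_le_eq)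
qed

lemma sqrt_add_le_sq_sub:
  fixes k u s j z :: real
  assumes "8 * k < u" "1 \<le> k" "u\<^sup>2 + 8 * k * u < s"
    and "j * (s + 1) \<le> u ^ 4" "z \<le> 8 * k * u\<^sup>2"
  shows "sqrt z + j \<le> u\<^sup>2 - k * u"
proof -
  have pos: "0 < u\<^sup>2 + 8 * k * u"
    using assms(1,2) by (simp add: add_pos_pos)
  have "sqrt z \<le> 3 * k * u"
    using assms(1,2,5) by (intro sqrt_le_three_mul) auto
  moreover have "j \<le> u\<^sup>2 - 4 * k * u"
  proof -
    have "j \<le> u ^ 4 / (s + 1)"
      using assms(4) pos assms(3) by (simp add: field_simps)
    also have "\<dots> \<le> u ^ 4 / (u\<^sup>2 + 8 * k * u)"
      using assms(3) pos by (intro divide_left_mono) simp_all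
    also have "\<dots> \<le> u\<^sup>2 - 4 * k * u"
      using assms(1,2) by (intro pow4_div_le) auto
    finally show ?thesis .
  qed
  ultimately show ?thesis
    using assms(1,2) by linarith
qed

lemma ex_blocks:
  fixes d r L :: nat
  assumes "0 < d" "d + r \<le> L"
  shows "\<exists>j\<ge>1. j * d + r \<le> L \<and> L < j * d + d + r"
proof -
  define j where "j = (L - r) div d"
  have "1 \<le> j"
    unfolding j_def using div_le_mono[of d "L - r" d] assms by simp
  moreover have "j * d + r \<le> L"
    unfolding j_def using div_times_less_eq_dividend[of "L - r" d] assms by linarith
  moreover have "L < j * d + d + r"
    unfolding j_def using div_mult_mod_eq[of "L - r" d] mod_less_divisor[of d "L - r"] assms
    by linarith
  ultimately show ?thesis
    by blast
qed

locale critical_longest_path =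
  critical_colouring n chi C1 C2 + longest_mono_path n chi c P for n chi C1 C2 c P
begin

lemma card_nbrs_le:
  assumes "y \<in> {1..n} - set P"
  shows "real (card {x \<in> set P. chi {x, y} = c}) \<le> 2 * (C1 - C2 + 1) * sqrt (real n)"
proof (cases "nbr_idx y = {}")
  case True
  then show ?thesis
    using C2_le_C1 by (simp add: card_nbrs_eq_card_nbr_idx)
next
  case False
  have "real (card (posa_set y)) < 2 * (C1 - C2 + real 1) * sqrt (real n)"
    using assms posa_set_subset card_posa_set_less covered_posa_set[OF assms False]
    by (intro card_less_if_covered_by_paths) (auto simp: posa_set_def)
  then show ?thesis
    using card_posa_set[OF assms False] by (simp add: card_nbrs_eq_card_nbr_idx)
qed

lemma ex_removable_subset_of_path:
  assumes "distinct ys" "set ys \<subseteq> {1..n} - set P" "ys \<noteq> []" "j \<ge> 1"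
    and "j * Suc (length ys) + 2 * nat \<lfloor>2 * (C1 - C2 + 1) * sqrt (real n)\<rfloor> \<le> length P"
  obtains W where "W \<subseteq> {1..n}" "W \<noteq> {}" "card W < n" "card W = j * Suc (length ys)"
    "\<And>c'. covered_by_paths n chi c' j W"
proof -
  have "\<forall>y\<in>set ys. card {x \<in> set P. chi {x, y} \<noteq> (\<not> c)}
      \<le> nat \<lfloor>2 * (C1 - C2 + 1) * sqrt (real n)\<rfloor>"
    using assms(2) card_nbrs_le by (simp add: le_nat_floor subset_iff)
  moreover have "j * Suc (length ys) + 2 * nat \<lfloor>2 * (C1 - C2 + 1) * sqrt (real n)\<rfloor>
      \<le> card (set P)"
    using assms(5) distinct_card[OF P_props(2)] by simp
  ultimately have "\<exists>W\<subseteq>set P. card W = j * Suc (length ys) \<and> covered_by_paths n chi (\<not> c) j W"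
    by (rule covered_by_alternating_paths[OF finite_set P_props(3) assms(1,2)])
  then obtain W where W: "W \<subseteq> set P" "card W = j * Suc (length ys)"
    "covered_by_paths n chi (\<not> c) j W"
    by blast
  have "covered_by_paths n chi c j W"
    using covered_by_paths_path[OF mono_path_P W(1)] assms(4) by (rule covered_by_paths_mono) simp
  then have "covered_by_paths n chi c' j W" for c'
    using W(3) by (cases "c' = c") auto
  moreover obtain y where "y \<in> set ys"
    using assms(3) by (cases ys) auto
  then have "card W < n"
    using W(1) assms(2) P_props(3) by (intro card_less_if_missing[of W n y]) auto
  moreover have "W \<noteq> {}"
    using W(2) assms(4) by auto
  ultimately show ?thesis
    using that W P_props(3) by blast
qed

context
  assumes large: "8 * (C1 - C2 + 1) < root 4 (real n)"
begin

text \<open>Otherwise a single alternating path through \<open>\<lceil>2 (C\<^sub>1 - C\<^sub>2 + 1) \<surd>n\<rceil>\<close> outside vertices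
  removes more vertices of \<open>P\<close> than the degree bound allows.\<close>

lemma card_outside_less: "real (card ({1..n} - set P)) < 2 * (C1 - C2 + 1) * sqrt (real n)"
proof (rule ccontr)
  define k u where "k = C1 - C2 + 1" and "u = root 4 (real n)"
  define D where "D = nat \<lfloor>2 * k * sqrt (real n)\<rfloor>"
  define a where "a = nat \<lceil>2 * k * u\<^sup>2\<rceil>"
  have k: "8 * k < u" "1 \<le> k"
    using C2_le_C1 large unfolding k_def u_def by simp_all
  have sq: "sqrt (real n) = u\<^sup>2"
    unfolding u_def by (simp add: root_4_squared)
  have u4: "u ^ 4 = real n"
    unfolding u_def by simp
  have D: "real D \<le> 2 * k * u\<^sup>2"
    unfolding D_def sq using k by (intro of_nat_floor) simp
  have "0 < 2 * k * u\<^sup>2"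
    using k by (simp add: power2_eq_square)
  then have a: "0 < a" "2 * k * u\<^sup>2 \<le> real a" "real a < 2 * k * u\<^sup>2 + 1"
    unfolding a_def using ceiling_correct[of "2 * k * u\<^sup>2"] by simp_all
  have "real (1 * Suc a + 2 * D) \<le> real (length P)"
    using pow4_ge_twelve_mul_sq[OF k] u4 card_le_twice_length a D by simp
  then have len: "1 * Suc a + 2 * D \<le> length P"
    by (simp only: of_nat_le_iff)
  assume "\<not> real (card ({1..n} - set P)) < 2 * (C1 - C2 + 1) * sqrt (real n)"
  then have "a \<le> card ({1..n} - set P)"
    unfolding a_def k_def sq by (simp add: nat_le_iff ceiling_le_iff)
  then obtain T where T: "T \<subseteq> {1..n} - set P" "card T = a" "finite T"
    by (rule obtain_subset_with_card_n)
  define ys where "ys = sorted_list_of_set T"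
  have ys: "distinct ys" "set ys \<subseteq> {1..n} - set P" "ys \<noteq> []" "length ys = a"
    using T a(1) unfolding ys_def by auto
  obtain W where "W \<subseteq> {1..n}" "W \<noteq> {}" "card W < n" "card W = 1 * Suc (length ys)"
    "\<And>c'. covered_by_paths n chi c' 1 W"
    by (rule ex_removable_subset_of_path[OF ys(1-3), where j = 1])
      (use len ys(4) in \<open>simp_all add: D_def k_def\<close>)
  then have "real (card W) < 2 * k * u\<^sup>2" "card W = Suc a"
    using card_less_if_covered_by_paths[of W 1] ys(4) unfolding k_def sq by simp_all
  then show False
    using a(2) by simp
qed

lemma card_outside_le:
  "real (card ({1..n} - set P)) \<le> sqrt (real n) + 8 * (C1 - C2 + 1) * root 4 (real n)"
proof (rule ccontr)
  define k u where "k = C1 - C2 + 1" and "u = root 4 (real n)"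
  define D where "D = nat \<lfloor>2 * k * sqrt (real n)\<rfloor>"
  define s L where "s = card ({1..n} - set P)" and "L = length P"
  have k: "8 * k < u" "1 \<le> k"
    using C2_le_C1 large unfolding k_def u_def by simp_all
  have sq: "sqrt (real n) = u\<^sup>2"
    unfolding u_def by (simp add: root_4_squared)
  have u4: "u ^ 4 = real n"
    unfolding u_def by simp
  have D: "real D \<le> 2 * k * u\<^sup>2"
    unfolding D_def sq using k by (intro of_nat_floor) simp
  have sL: "real s + real L = real n"
    unfolding s_def L_def using P_props(2,3) mono_path_length_le[OF mono_path_P]
    by (simp add: card_Diff_subset distinct_card flip: of_nat_add)
  have s_small: "real s < 2 * k * u\<^sup>2"
    using card_outside_less unfolding s_def k_def sq .
  assume "\<not> real (card ({1..n} - set P)) \<le> sqrt (real n) + 8 * (C1 - C2 + 1) * root 4 (real n)"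
  then have s_large: "u\<^sup>2 + 8 * k * u < real s"
    unfolding s_def k_def u_def sq by simp
  moreover have "0 < u\<^sup>2 + 8 * k * u"
    using k by (simp add: add_pos_pos)
  ultimately have "s \<noteq> 0"
    by linarith
  text \<open>Cut the path into \<open>j\<close> blocks of \<open>s + 1\<close> vertices, leaving \<open>2 D\<close> spare vertices
    and a remainder of at most \<open>s\<close>; each block is covered by a path alternating with all
    of the \<open>s\<close> vertices outside.\<close>
  have "real (Suc s + 2 * D) \<le> real L"
    using pow4_ge_twelve_mul_sq[OF k] u4 sL D s_small by simp
  then obtain j where j: "1 \<le> j" "j * Suc s + 2 * D \<le> L" "L < j * Suc s + Suc s + 2 * D"
    using ex_blocks[of "Suc s" "2 * D" L] by (simp only: of_nat_le_iff) auto
  define ys where "ys = sorted_list_of_set ({1..n} - set P)"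
  have ys: "distinct ys" "set ys \<subseteq> {1..n} - set P" "ys \<noteq> []" "length ys = s"
    using \<open>s \<noteq> 0\<close> unfolding ys_def s_def by auto
  obtain W where W: "W \<subseteq> {1..n}" "W \<noteq> {}" "card W < n" "card W = j * Suc (length ys)"
    "\<And>c'. covered_by_paths n chi c' j W"
    by (rule ex_removable_subset_of_path[OF ys(1-3) j(1)])
      (use j(2) ys(4) in \<open>simp_all add: D_def k_def L_def\<close>)
  have "u\<^sup>2 + C2 < sqrt (real n - real (card W)) + C1 + real j"
    using sqrt_less_remove[OF W(1-3,5)] sq by simp
  moreover have "sqrt (real n - real (card W)) + real j \<le> u\<^sup>2 - k * u"
  proof (rule sqrt_add_le_sq_sub[OF k s_large])
    have "j * Suc s \<le> L" "L \<le> j * Suc s + s + 2 * D"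
      using j(2,3) by linarith+
    then have "real (j * Suc s) \<le> real L" "real L \<le> real (j * Suc s + s + 2 * D)"
      by (simp_all only: of_nat_le_iff)
    then show "real j * (real s + 1) \<le> u ^ 4" "real n - real (card W) \<le> 8 * k * u\<^sup>2"
      using W(4) ys(4) sL u4 D s_small by (simp_all add: algebra_simps)
  qed
  moreover have "k \<le> k * u"
    using k by simp
  ultimately show False
    unfolding k_def by linarith
qed

end

end

theorem lemma3p2:
  fixes C1 C2 :: real and n :: nat and chi :: colouring
  assumes "C1 \<ge> C2" and "C2 \<ge> 0"
    and "real n > 8 ^ 4 * (C1 - C2 + 1) ^ 4"
    and "\<forall>m. 1 \<le> m \<and> m < n \<longrightarrow> real (f_max m) < sqrt (real m) + C1"
    and "real (f_col n chi) > sqrt (real n) + C2"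
  shows "\<exists>P c. mono_path n chi c P \<and>
           real (card ({1..n} - set P)) \<le> sqrt (real n) + 8 * (C1 - C2 + 1) * root 4 (real n) \<and>
           (\<forall>y \<in> {1..n} - set P.
              real (card {x \<in> set P. chi {x, y} = c}) \<le> 2 * (C1 - C2 + 1) * sqrt (real n))"
proof -
  have "(8 * (C1 - C2 + 1)) ^ 4 < root 4 (real n) ^ 4"
    using assms(3) by (simp only: power_mult_distrib real_root_pow_pos2)
  then have large: "8 * (C1 - C2 + 1) < root 4 (real n)"
    by (rule power_less_imp_less_base) simp
  then have "n \<ge> 1"
    using assms(1) by (cases n) auto
  then obtain c P where "longest_mono_path n chi c P"
    using ex_longest_mono_path by blast
  then interpret critical_longest_path n chi C1 C2 c P
    using assms(1,4,5) by (simp add: critical_longest_path_def critical_colouring_def)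
  show ?thesis
    using mono_path_P card_outside_le[OF large] card_nbrs_le by blast
qed

end
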